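(* Let $(X,d)$ be a metric space, let $x_0\in X$ and $r\ge 0$, and let $C_{x_0,r}=\{x\in X: d(x_0,x)=r\}$. Define $\varphi:X\to[0,\infty)$ by $\varphi(x)=d(x,x_0)$ for all $x\in X$. If there exists a self-mapping $T:X\to X$ satisfying (C1)* $d(x,Tx)\le \varphi(x)+\varphi(Tx)-2r$ and (C2)* $d(Tx,x_0)\le r$ for each $x\in C_{x_0,r}$, then $C_{x_0,r}$ is a fixed circle of $T$, i.e. $Tx=x$ for every $x\in C_{x_0,r}$.
   Context: For a metric space $(X,d)$, the circle with center $x_0\in X$ and radius $r$ is $C_{x_0,r}=\{x\in X: d(x_0,x)=r\}$. For a self-mapping $T:X\to X$, the circle $C_{x_0,r}$ is called a fixed circle of $T$ if $Tx=x$ for every $x\in C_{x_0,r}$. *)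

theory Defs
  imports "HOL-Analysis.Analysis"
begin

definition circle :: "'a::metric_space \<Rightarrow> real \<Rightarrow> 'a set" where
  "circle x0 r = {x. dist x0 x = r}"

definition fixed_circle :: "('a::metric_space \<Rightarrow> 'a) \<Rightarrow> 'a \<Rightarrow> real \<Rightarrow> bool" where
  "fixed_circle T x0 r \<longleftrightarrow> (\<forall>x\<in>circle x0 r. T x = x)"

end

theory Submission
  imports Defs
begin

text \<open>On the circle, (C1)* reads d(x, Tx) \<le> d(Tx, x0) - r, and (C2)* makes the right-hand side
  nonpositive.\<close>

lemma fixed_if_dist_le_excess_radius:
  fixes x y x0 :: "'a::metric_space"
  assumes "dist x x0 = r"
    and "dist x y \<le> dist x x0 + dist y x0 - 2 * r"
    and "dist y x0 \<le> r"
  shows "y = x"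
proof -
  have "dist x y \<le> 0" using assms by linarith
  then show ?thesis by simp
qed

theorem theorem2p9:
  fixes T :: "'a::metric_space \<Rightarrow> 'a" and x0 :: 'a and r :: real
    and \<phi> :: "'a \<Rightarrow> real"
  assumes "r \<ge> 0"
    and "\<And>x. \<phi> x = dist x x0"
    and C1: "\<And>x. x \<in> circle x0 r \<Longrightarrow> dist x (T x) \<le> \<phi> x + \<phi> (T x) - 2 * r"
    and C2: "\<And>x. x \<in> circle x0 r \<Longrightarrow> dist (T x) x0 \<le> r"
  shows "fixed_circle T x0 r"
  unfolding fixed_circle_def
proof
  fix x assume x: "x \<in> circle x0 r"
  then have "dist x x0 = r" by (simp add: circle_def dist_commute)
  moreover have "dist x (T x) \<le> dist x x0 + dist (T x) x0 - 2 * r"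
    using C1[OF x] by (simp only: assms(2))
  ultimately show "T x = x"
    using C2[OF x] by (rule fixed_if_dist_le_excess_radius)
qed

end
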